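(* Let $D=(S\uplus I,A)$ be a directed acyclic graph whose vertex set is partitioned into a set $S$ and a set $I$ of internal vertices, and let $T\subseteq I$ be a set of vertices that are pairwise false twins in $D$. Then among the total elimination sequences of $D$ of minimum cost there is one in which the vertices of $T$ are eliminated consecutively (i.e., they form a contiguous block of the sequence).
   Context: For a DAG $D$ and a vertex $v$, $N^-_D(v)$ and $N^+_D(v)$ are the open in- and out-neighborhoods, and the Markowitz degree is $\mu_D(v)=|N^-_D(v)|\cdot|N^+_D(v)|$. Two vertices $u,v$ are false twins if $N^-_D(u)=N^-_D(v)$ and $N^+_D(u)=N^+_D(v)$. Eliminating $v$ produces $D_{/v}$: delete $v$ and add every arc $(x,y)$ with $x\in N^-_D(v)$, $y\in N^+_D(v)$ not already present. For a sequence $\sigma=(v_1,\dots,v_\ell)$ of distinct internal vertices, $D_\sigma=(((D_{/v_1})_{/v_2})\dots)_{/v_\ell}$; $\sigma$ is total if $\ell=|I|$. The cost of $\sigma$ is $\sum_{i=1}^{\ell}\mu_{D_{(v_1,\dots,v_{i-1})}}(v_i)$, the sum of Markowitz degrees of each vertex at the moment it is eliminated. *)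

theory Defs
  imports Main
begin

(* A digraph is represented by its arc relation A :: ('a * 'a) set;
   the vertex set is given separately as S \<union> I. *)

definition in_nbrs :: "('a \<times> 'a) set \<Rightarrow> 'a \<Rightarrow> 'a set" where
  "in_nbrs A v = {x. (x, v) \<in> A}"

definition out_nbrs :: "('a \<times> 'a) set \<Rightarrow> 'a \<Rightarrow> 'a set" where
  "out_nbrs A v = {y. (v, y) \<in> A}"

definition markowitz :: "('a \<times> 'a) set \<Rightarrow> 'a \<Rightarrow> nat" where
  "markowitz A v = card (in_nbrs A v) * card (out_nbrs A v)"

definition false_twins :: "('a \<times> 'a) set \<Rightarrow> 'a \<Rightarrow> 'a \<Rightarrow> bool" where
  "false_twins A u v \<longleftrightarrow> in_nbrs A u = in_nbrs A v \<and> out_nbrs A u = out_nbrs A v"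

definition elim :: "('a \<times> 'a) set \<Rightarrow> 'a \<Rightarrow> ('a \<times> 'a) set" where
  "elim A v = {(x, y). (x, y) \<in> A \<and> x \<noteq> v \<and> y \<noteq> v}
              \<union> {(x, y). x \<in> in_nbrs A v \<and> y \<in> out_nbrs A v}"

fun elim_cost :: "('a \<times> 'a) set \<Rightarrow> 'a list \<Rightarrow> nat" where
  "elim_cost A [] = 0"
| "elim_cost A (v # vs) = markowitz A v + elim_cost (elim A v) vs"

definition total_elim_seq :: "'a set \<Rightarrow> 'a list \<Rightarrow> bool" where
  "total_elim_seq I \<sigma> \<longleftrightarrow> distinct \<sigma> \<and> set \<sigma> = I"

end

theory Submission
  imports Defs
begin

text \<open>
  Consider a total sequence and the first vertex of \<open>T\<close> in it. The twins share an
  in-neighbourhood \<open>X\<close> and an out-neighbourhood \<open>Y\<close>, and eliminating the first of them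
  creates all arcs \<open>X \<times> Y\<close>; adding these arcs from the start therefore does not change the
  cost. Once \<open>X \<times> Y\<close> is present, eliminating a twin merely deletes it, so the cost splits
  into the cost of the vertices outside \<open>T\<close> in the graph without \<open>T\<close>, plus one term per
  twin that depends only on the number of vertices outside \<open>T\<close> eliminated before it.
  Moving all twins to the position where this term is smallest does not increase the
  cost, and removing the arcs \<open>X \<times> Y\<close> again can only lower it.
\<close>

lemma acyclic_no_loop: "acyclic A \<Longrightarrow> (a, a) \<notin> A"
  unfolding acyclic_def by blast

lemma acyclic_no_2cycle: "acyclic A \<Longrightarrow> (a, b) \<in> A \<Longrightarrow> (b, a) \<notin> A"
  unfolding acyclic_def by (meson r_into_trancl trancl_into_trancl)

lemma acyclic_subset_trancl: "acyclic A \<Longrightarrow> B \<subseteq> A\<^sup>+ \<Longrightarrow> acyclic B"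
  by (rule acyclic_subset[of "A\<^sup>+"]) (simp_all add: acyclic_def)

lemma elim_subset_trancl: "elim A v \<subseteq> A\<^sup>+"
  unfolding elim_def in_nbrs_def out_nbrs_def by (auto intro: trancl_into_trancl)

lemma acyclic_elim: "acyclic A \<Longrightarrow> acyclic (elim A v)"
  by (rule acyclic_subset_trancl[OF _ elim_subset_trancl])

lemma finite_in_nbrs: "finite A \<Longrightarrow> finite (in_nbrs A v)"
  unfolding in_nbrs_def by (rule finite_subset[of _ "fst ` A"]) force+

lemma finite_out_nbrs: "finite A \<Longrightarrow> finite (out_nbrs A v)"
  unfolding out_nbrs_def by (rule finite_subset[of _ "snd ` A"]) force+

lemma finite_elim: "finite A \<Longrightarrow> finite (elim A v)"
  by (rule finite_subset[of _ "A \<union> fst ` A \<times> snd ` A"])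
    (force simp: elim_def in_nbrs_def out_nbrs_def)+

lemma elim_mono: "A \<subseteq> B \<Longrightarrow> elim A v \<subseteq> elim B v"
  unfolding elim_def in_nbrs_def out_nbrs_def by auto

lemma markowitz_mono:
  assumes "finite B" "A \<subseteq> B"
  shows "markowitz A v \<le> markowitz B v"
  unfolding markowitz_def
proof (rule mult_le_mono)
  show "card (in_nbrs A v) \<le> card (in_nbrs B v)"
    using assms by (intro card_mono finite_in_nbrs) (auto simp: in_nbrs_def)
  show "card (out_nbrs A v) \<le> card (out_nbrs B v)"
    using assms by (intro card_mono finite_out_nbrs) (auto simp: out_nbrs_def)
qed

lemma elim_cost_mono: "finite B \<Longrightarrow> A \<subseteq> B \<Longrightarrow> elim_cost A \<sigma> \<le> elim_cost B \<sigma>"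
proof (induction \<sigma> arbitrary: A B)
  case (Cons v \<sigma>)
  have "elim_cost (elim A v) \<sigma> \<le> elim_cost (elim B v) \<sigma>"
    using Cons by (simp add: finite_elim elim_mono)
  then show ?case using markowitz_mono[OF Cons.prems, of v] by simp
qed simp

lemma false_twins_elim:
  "false_twins A u v \<Longrightarrow> u \<noteq> w \<Longrightarrow> v \<noteq> w \<Longrightarrow> false_twins (elim A w) u v"
  unfolding false_twins_def elim_def in_nbrs_def out_nbrs_def by (auto simp: set_eq_iff)

definition del_vertices :: "('a \<times> 'a) set \<Rightarrow> 'a set \<Rightarrow> ('a \<times> 'a) set" where
  "del_vertices A R = {(x, y). (x, y) \<in> A \<and> x \<notin> R \<and> y \<notin> R}"

lemma del_vertices_empty [simp]: "del_vertices A {} = A"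
  unfolding del_vertices_def by auto

lemma del_vertices_del_vertices: "del_vertices (del_vertices A R) R' = del_vertices A (R \<union> R')"
  unfolding del_vertices_def by auto

lemma del_vertices_subset: "del_vertices A R \<subseteq> A"
  unfolding del_vertices_def by auto

lemma acyclic_del_vertices: "acyclic A \<Longrightarrow> acyclic (del_vertices A R)"
  using acyclic_subset del_vertices_subset by blast

lemma finite_del_vertices: "finite A \<Longrightarrow> finite (del_vertices A R)"
  using finite_subset del_vertices_subset by blast

lemma del_vertices_elim_commute: "w \<notin> R \<Longrightarrow> del_vertices (elim A w) R = elim (del_vertices A R) w"
  unfolding del_vertices_def elim_def in_nbrs_def out_nbrs_def by auto

definition common_nbrs :: "('a \<times> 'a) set \<Rightarrow> 'a set \<Rightarrow> 'a set \<Rightarrow> 'a set \<Rightarrow> bool" where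
  "common_nbrs A T X Y \<longleftrightarrow> (\<forall>t\<in>T. in_nbrs A t = X \<and> out_nbrs A t = Y)"

lemma common_nbrs_notin:
  assumes "acyclic A" "common_nbrs A T X Y" "t \<in> T"
  shows "t \<notin> X" "t \<notin> Y"
proof -
  have "in_nbrs A t = X" "out_nbrs A t = Y" using assms(2,3) unfolding common_nbrs_def by auto
  then show "t \<notin> X" "t \<notin> Y"
    using acyclic_no_loop[OF assms(1), of t] unfolding in_nbrs_def out_nbrs_def by auto
qed

lemma common_nbrs_disjoint:
  assumes "acyclic A" "common_nbrs A T X Y" "t \<in> T"
  shows "X \<inter> Y = {}"
proof -
  have "in_nbrs A t = X" "out_nbrs A t = Y" using assms(2,3) unfolding common_nbrs_def by auto
  then show ?thesis
    using acyclic_no_2cycle[OF assms(1), of _ t] unfolding in_nbrs_def out_nbrs_def by auto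
qed

text \<open>
  The in- and out-neighbourhood of a twin with neighbourhoods \<open>X\<close> and \<open>Y\<close> after
  eliminating \<open>w\<close>, computed in a graph \<open>K\<close> from which the twins have been deleted.
\<close>

definition in_after_elim :: "('a \<times> 'a) set \<Rightarrow> 'a \<Rightarrow> 'a set \<Rightarrow> 'a set" where
  "in_after_elim K w X = (X - {w}) \<union> (if w \<in> X then in_nbrs K w else {})"

definition out_after_elim :: "('a \<times> 'a) set \<Rightarrow> 'a \<Rightarrow> 'a set \<Rightarrow> 'a set" where
  "out_after_elim K w Y = (Y - {w}) \<union> (if w \<in> Y then out_nbrs K w else {})"

lemma common_nbrs_elim:
  assumes ac: "acyclic A" and cn: "common_nbrs A T X Y" and w: "w \<notin> T"
  shows "common_nbrs (elim A w) T
           (in_after_elim (del_vertices A T) w X) (out_after_elim (del_vertices A T) w Y)"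
  unfolding common_nbrs_def
proof
  fix t assume t: "t \<in> T"
  have X: "in_nbrs A t = X" and Y: "out_nbrs A t = Y" using cn t unfolding common_nbrs_def by auto
  have XY: "X \<inter> Y = {}" by (rule common_nbrs_disjoint[OF ac cn t])
  have "in_nbrs A w \<inter> T = {}" if "w \<in> X"
    using that XY cn unfolding common_nbrs_def in_nbrs_def out_nbrs_def by blast
  moreover have "out_nbrs A w \<inter> T = {}" if "w \<in> Y"
    using that XY cn unfolding common_nbrs_def in_nbrs_def out_nbrs_def by blast
  ultimately show "in_nbrs (elim A w) t = in_after_elim (del_vertices A T) w X
    \<and> out_nbrs (elim A w) t = out_after_elim (del_vertices A T) w Y"
    using X Y t w unfolding in_after_elim_def out_after_elim_def elim_def del_vertices_def
      in_nbrs_def out_nbrs_def by auto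
qed

lemma product_subset_elim:
  assumes ac: "acyclic A" and cn: "common_nbrs A T X Y" and t: "t \<in> T" and XY: "X \<times> Y \<subseteq> A"
  shows "in_after_elim (del_vertices A T) w X \<times> out_after_elim (del_vertices A T) w Y \<subseteq> elim A w"
proof -
  have "X \<inter> Y = {}" by (rule common_nbrs_disjoint[OF ac cn t])
  then show ?thesis
    using XY unfolding in_after_elim_def out_after_elim_def elim_def del_vertices_def
      in_nbrs_def out_nbrs_def by auto
qed

text \<open>
  A twin with neighbourhoods \<open>X\<close> and \<open>Y\<close> is an in-neighbour of every \<open>w \<in> Y\<close> and an
  out-neighbour of every \<open>w \<in> X\<close>; this is its share in the Markowitz degree of \<open>w\<close>.
\<close>

definition twin_share :: "('a \<times> 'a) set \<Rightarrow> 'a set \<Rightarrow> 'a set \<Rightarrow> 'a \<Rightarrow> nat" where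
  "twin_share K X Y w =
     (if w \<in> Y then card (out_nbrs K w) else if w \<in> X then card (in_nbrs K w) else 0)"

lemma markowitz_del_twins:
  assumes ac: "acyclic A" and fin: "finite A" and "finite T" and cn: "common_nbrs A T X Y"
    and w: "w \<notin> T" and t: "t \<in> T"
  shows "markowitz A w =
           markowitz (del_vertices A T) w + card T * twin_share (del_vertices A T) X Y w"
proof -
  let ?K = "del_vertices A T"
  have fK: "finite ?K" using fin by (rule finite_del_vertices)
  have "in_nbrs A w = in_nbrs ?K w \<union> (if w \<in> Y then T else {})"
    using cn w t unfolding common_nbrs_def del_vertices_def in_nbrs_def out_nbrs_def by auto
  moreover have "in_nbrs ?K w \<inter> T = {}" unfolding in_nbrs_def del_vertices_def by auto
  ultimately have in_card: "card (in_nbrs A w) = card (in_nbrs ?K w) + (if w \<in> Y then card T else 0)"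
    using card_Un_disjoint[OF finite_in_nbrs[OF fK] \<open>finite T\<close>] by simp
  have "out_nbrs A w = out_nbrs ?K w \<union> (if w \<in> X then T else {})"
    using cn w t unfolding common_nbrs_def del_vertices_def in_nbrs_def out_nbrs_def by auto
  moreover have "out_nbrs ?K w \<inter> T = {}" unfolding out_nbrs_def del_vertices_def by auto
  ultimately have out_card: "card (out_nbrs A w) = card (out_nbrs ?K w) + (if w \<in> X then card T else 0)"
    using card_Un_disjoint[OF finite_out_nbrs[OF fK] \<open>finite T\<close>] by simp
  have "X \<inter> Y = {}" by (rule common_nbrs_disjoint[OF ac cn t])
  then show ?thesis
    unfolding markowitz_def in_card out_card twin_share_def by (auto simp: algebra_simps)
qed

lemma elim_twin_eq_del_vertex:
  assumes "acyclic A" "common_nbrs A T X Y" "t \<in> T" "X \<times> Y \<subseteq> A"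
  shows "elim A t = del_vertices A {t}"
proof -
  have "in_nbrs A t = X" "out_nbrs A t = Y" using assms(2,3) unfolding common_nbrs_def by auto
  moreover have "t \<notin> X" "t \<notin> Y" using common_nbrs_notin[OF assms(1-3)] by auto
  ultimately show ?thesis using assms(4) unfolding elim_def del_vertices_def by auto
qed

lemma common_nbrs_del_twin:
  assumes "acyclic A" "common_nbrs A T X Y" "t \<in> T" "X \<times> Y \<subseteq> A"
  shows "common_nbrs (del_vertices A {t}) (T - {t}) X Y" "X \<times> Y \<subseteq> del_vertices A {t}"
  using assms common_nbrs_notin[OF assms(1-3)]
  unfolding common_nbrs_def in_nbrs_def out_nbrs_def del_vertices_def by auto

subsection \<open>Splitting the cost of a sequence\<close>

text \<open>
  The cost caused by one twin that is eliminated after the first \<open>p\<close> vertices of \<open>\<rho>\<close>: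
  its shares in the Markowitz degrees of these vertices, plus its own degree when it is
  eliminated.
\<close>

fun twin_cost :: "('a \<times> 'a) set \<Rightarrow> 'a set \<Rightarrow> 'a set \<Rightarrow> 'a list \<Rightarrow> nat \<Rightarrow> nat" where
  "twin_cost K X Y (w # \<rho>) (Suc p) =
     twin_share K X Y w + twin_cost (elim K w) (in_after_elim K w X) (out_after_elim K w Y) \<rho> p"
| "twin_cost K X Y _ _ = card X * card Y"

text \<open>For each vertex of \<open>T\<close> in \<open>\<sigma>\<close>, in order, the number of vertices outside \<open>T\<close> before it.\<close>

fun twin_positions :: "'a set \<Rightarrow> 'a list \<Rightarrow> nat list" where
  "twin_positions T [] = []"
| "twin_positions T (x # xs) =
     (if x \<in> T then 0 # twin_positions T xs else map Suc (twin_positions T xs))"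

lemma twin_positions_cong:
  "(\<And>x. x \<in> set \<sigma> \<Longrightarrow> x \<in> T \<longleftrightarrow> x \<in> T') \<Longrightarrow> twin_positions T \<sigma> = twin_positions T' \<sigma>"
  by (induction \<sigma>) auto

lemma twin_positions_empty [simp]: "twin_positions {} \<sigma> = []"
  by (induction \<sigma>) auto

lemma length_twin_positions: "length (twin_positions T \<sigma>) = length (filter (\<lambda>x. x \<in> T) \<sigma>)"
  by (induction \<sigma>) auto

lemma length_twin_positions_card:
  assumes "distinct \<sigma>" "T \<subseteq> set \<sigma>"
  shows "length (twin_positions T \<sigma>) = card T"
proof -
  have "set (filter (\<lambda>x. x \<in> T) \<sigma>) = T" using assms(2) by auto
  then show ?thesis
    using distinct_card[of "filter (\<lambda>x. x \<in> T) \<sigma>"] assms(1) by (simp add: length_twin_positions)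
qed

lemma twin_positions_le: "p \<in> set (twin_positions T \<sigma>) \<Longrightarrow> p \<le> length (filter (\<lambda>x. x \<notin> T) \<sigma>)"
  by (induction \<sigma> arbitrary: p) (auto split: if_splits)

lemma twin_positions_append:
  "twin_positions T (xs @ ys) =
     twin_positions T xs @ map (\<lambda>p. p + length (filter (\<lambda>x. x \<notin> T) xs)) (twin_positions T ys)"
  by (induction xs) (auto simp: comp_def)

lemma twin_positions_outside: "\<forall>x\<in>set xs. x \<notin> T \<Longrightarrow> twin_positions T xs = []"
  by (induction xs) auto

lemma twin_positions_inside: "\<forall>x\<in>set xs. x \<in> T \<Longrightarrow> twin_positions T xs = replicate (length xs) 0"
  by (induction xs) auto

lemma elim_cost_split_twins:
  assumes "acyclic A" "finite A" "common_nbrs A T X Y" "X \<times> Y \<subseteq> A"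
    and "distinct \<sigma>" "T \<subseteq> set \<sigma>"
  shows "elim_cost A \<sigma> = elim_cost (del_vertices A T) (filter (\<lambda>x. x \<notin> T) \<sigma>)
           + sum_list (map (twin_cost (del_vertices A T) X Y (filter (\<lambda>x. x \<notin> T) \<sigma>))
                           (twin_positions T \<sigma>))"
  using assms
proof (induction \<sigma> arbitrary: A T X Y)
  case (Cons a \<sigma>)
  note ac = Cons.prems(1) and fin = Cons.prems(2) and cn = Cons.prems(3) and XY = Cons.prems(4)
  have d: "distinct \<sigma>" "a \<notin> set \<sigma>" using Cons.prems(5) by auto
  show ?case
  proof (cases "a \<in> T")
    case True
    let ?A = "del_vertices A {a}" and ?T = "T - {a}"
    have "?T \<subseteq> set \<sigma>" using Cons.prems(6) by auto
    then have IH: "elim_cost ?A \<sigma> = elim_cost (del_vertices ?A ?T) (filter (\<lambda>x. x \<notin> ?T) \<sigma>)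
        + sum_list (map (twin_cost (del_vertices ?A ?T) X Y (filter (\<lambda>x. x \<notin> ?T) \<sigma>))
                        (twin_positions ?T \<sigma>))"
      using Cons.IH acyclic_del_vertices[OF ac] finite_del_vertices[OF fin]
        common_nbrs_del_twin[OF ac cn True XY] d(1) by blast
    have "del_vertices ?A ?T = del_vertices A T"
      using True by (simp add: del_vertices_del_vertices insert_absorb)
    moreover have "filter (\<lambda>x. x \<notin> ?T) \<sigma> = filter (\<lambda>x. x \<notin> T) \<sigma>"
      using d(2) by (intro filter_cong) auto
    moreover have "twin_positions ?T \<sigma> = twin_positions T \<sigma>"
      using d(2) by (intro twin_positions_cong) auto
    moreover have "elim A a = ?A" by (rule elim_twin_eq_del_vertex[OF ac cn True XY])
    moreover have "markowitz A a = card X * card Y"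
      using cn True unfolding common_nbrs_def markowitz_def by auto
    ultimately show ?thesis using IH True by simp
  next
    case False
    show ?thesis
    proof (cases "T = {}")
      case True
      then show ?thesis by simp
    next
      case nonempty: False
      then obtain t where t: "t \<in> T" by blast
      let ?K = "del_vertices A T"
      let ?X = "in_after_elim ?K a X" and ?Y = "out_after_elim ?K a Y"
      have "acyclic (elim A a)" using ac by (rule acyclic_elim)
      moreover have "finite (elim A a)" using fin by (rule finite_elim)
      moreover have "common_nbrs (elim A a) T ?X ?Y" by (rule common_nbrs_elim[OF ac cn False])
      moreover have "?X \<times> ?Y \<subseteq> elim A a" by (rule product_subset_elim[OF ac cn t XY])
      moreover have sub: "T \<subseteq> set \<sigma>" using Cons.prems(6) False by auto
      ultimately have IH: "elim_cost (elim A a) \<sigma> = elim_cost (elim ?K a) (filter (\<lambda>x. x \<notin> T) \<sigma>)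
          + sum_list (map (twin_cost (elim ?K a) ?X ?Y (filter (\<lambda>x. x \<notin> T) \<sigma>)) (twin_positions T \<sigma>))"
        using Cons.IH d(1) del_vertices_elim_commute[OF False] by metis
      have "finite T" using sub by (rule finite_subset) simp
      then have "markowitz A a = markowitz ?K a + card T * twin_share ?K X Y a"
        by (rule markowitz_del_twins[OF ac fin _ cn False t])
      moreover have "length (twin_positions T \<sigma>) = card T"
        by (rule length_twin_positions_card[OF d(1) sub])
      ultimately show ?thesis
        using IH False by (simp add: comp_def sum_list_addf sum_list_triv)
    qed
  qed
qed simp

subsection \<open>Gathering the twins\<close>

definition contiguous_block :: "'a set \<Rightarrow> 'a list \<Rightarrow> bool" where
  "contiguous_block T \<sigma> \<longleftrightarrow> (\<exists>xs ys zs. \<sigma> = xs @ ys @ zs \<and> set ys = T)"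

lemma ex_length_mult_le_sum_list:
  fixes f :: "'a \<Rightarrow> nat"
  assumes "ps \<noteq> []"
  obtains q where "q \<in> set ps" "length ps * f q \<le> sum_list (map f ps)"
proof
  let ?q = "arg_min_list f ps"
  show "?q \<in> set ps" using assms by (rule arg_min_list_in)
  have "f ?q \<le> f p" if "p \<in> set ps" for p
    using that assms by (simp add: f_arg_min_list_f)
  then have "sum_list (map (\<lambda>_. f ?q) ps) \<le> sum_list (map f ps)" by (rule sum_list_mono)
  then show "length ps * f ?q \<le> sum_list (map f ps)" by (simp add: sum_list_triv)
qed

lemma twin_positions_insert_block:
  assumes "\<forall>x\<in>set \<rho>. x \<notin> T" "\<forall>x\<in>set \<tau>. x \<in> T" "q \<le> length \<rho>"
  shows "filter (\<lambda>x. x \<notin> T) (take q \<rho> @ \<tau> @ drop q \<rho>) = \<rho>"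
    and "twin_positions T (take q \<rho> @ \<tau> @ drop q \<rho>) = replicate (length \<tau>) q"
proof -
  have out: "\<forall>x\<in>set (take q \<rho>). x \<notin> T" "\<forall>x\<in>set (drop q \<rho>). x \<notin> T"
    using assms(1) by (auto dest: in_set_takeD in_set_dropD)
  then show "filter (\<lambda>x. x \<notin> T) (take q \<rho> @ \<tau> @ drop q \<rho>) = \<rho>"
    using assms(2) by (simp add: filter_id_conv filter_empty_conv)
  show "twin_positions T (take q \<rho> @ \<tau> @ drop q \<rho>) = replicate (length \<tau>) q"
    using out assms(2,3)
    by (simp add: twin_positions_append twin_positions_outside twin_positions_inside filter_id_conv
        map_replicate_const)
qed

lemma contiguous_rearrangement_with_product:
  assumes ac: "acyclic A" and fin: "finite A" and cn: "common_nbrs A T X Y" and XY: "X \<times> Y \<subseteq> A"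
    and d: "distinct \<sigma>" and sub: "T \<subseteq> set \<sigma>"
  obtains \<sigma>' where "distinct \<sigma>'" "set \<sigma>' = set \<sigma>" "contiguous_block T \<sigma>'"
    "elim_cost A \<sigma>' \<le> elim_cost A \<sigma>"
proof (cases "T = {}")
  case True
  then have "contiguous_block T \<sigma>" unfolding contiguous_block_def by force
  then show ?thesis using that d by blast
next
  case False
  define \<rho> where "\<rho> = filter (\<lambda>x. x \<notin> T) \<sigma>"
  define \<tau> where "\<tau> = filter (\<lambda>x. x \<in> T) \<sigma>"
  define c where "c = twin_cost (del_vertices A T) X Y \<rho>"
  have split: "elim_cost A \<sigma>' = elim_cost (del_vertices A T) \<rho> + sum_list (map c (twin_positions T \<sigma>'))"
    if "distinct \<sigma>'" "set \<sigma>' = set \<sigma>" "filter (\<lambda>x. x \<notin> T) \<sigma>' = \<rho>" for \<sigma>'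
    using elim_cost_split_twins[OF ac fin cn XY that(1)] that(2,3) sub unfolding c_def by simp
  have "card T > 0" using False finite_subset[OF sub] by (simp add: card_gt_0_iff)
  then have "twin_positions T \<sigma> \<noteq> []" using length_twin_positions_card[OF d sub] by auto
  then obtain q where q: "q \<in> set (twin_positions T \<sigma>)"
    "card T * c q \<le> sum_list (map c (twin_positions T \<sigma>))"
    using ex_length_mult_le_sum_list length_twin_positions_card[OF d sub] by metis
  have q_le: "q \<le> length \<rho>" using twin_positions_le[OF q(1)] unfolding \<rho>_def .
  define \<sigma>' where "\<sigma>' = take q \<rho> @ \<tau> @ drop q \<rho>"
  have \<rho>T: "\<forall>x\<in>set \<rho>. x \<notin> T" and \<tau>T: "\<forall>x\<in>set \<tau>. x \<in> T" unfolding \<rho>_def \<tau>_def by auto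
  have "set \<tau> = T" "distinct \<tau>" "distinct \<rho>" using sub d unfolding \<tau>_def \<rho>_def by auto
  then have "distinct \<sigma>'"
    using \<rho>T set_take_disj_set_drop_if_distinct[of \<rho> q q] unfolding \<sigma>'_def
    by (auto dest: in_set_takeD in_set_dropD)
  moreover have "set \<sigma>' = set \<sigma>"
    using set_append[of "take q \<rho>" "drop q \<rho>"] unfolding \<sigma>'_def \<rho>_def \<tau>_def by auto
  moreover note twin_positions_insert_block[OF \<rho>T \<tau>T q_le, folded \<sigma>'_def]
  moreover have "length \<tau> = card T" using distinct_card \<open>set \<tau> = T\<close> \<open>distinct \<tau>\<close> by metis
  ultimately have "elim_cost A \<sigma>' = elim_cost (del_vertices A T) \<rho> + card T * c q"
    using split by (simp add: sum_list_replicate)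
  also have "\<dots> \<le> elim_cost A \<sigma>"
    using split[OF d refl] q(2) unfolding \<rho>_def by simp
  finally have "elim_cost A \<sigma>' \<le> elim_cost A \<sigma>" .
  moreover have "contiguous_block T \<sigma>'"
    unfolding contiguous_block_def \<sigma>'_def using \<open>set \<tau> = T\<close> by blast
  ultimately show ?thesis using that \<open>distinct \<sigma>'\<close> \<open>set \<sigma>' = set \<sigma>\<close> by blast
qed

lemma common_nbrs_false_twins:
  "\<forall>u\<in>T. \<forall>v\<in>T. false_twins A u v \<Longrightarrow> t \<in> T \<Longrightarrow> common_nbrs A T (in_nbrs A t) (out_nbrs A t)"
  unfolding common_nbrs_def false_twins_def by metis

lemma common_nbrs_add_product:
  assumes ac: "acyclic A" and fin: "finite A" and cn: "common_nbrs A T X Y" and t: "t \<in> T"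
  shows "acyclic (A \<union> X \<times> Y)" "finite (A \<union> X \<times> Y)" "common_nbrs (A \<union> X \<times> Y) T X Y"
proof -
  have X: "in_nbrs A t = X" and Y: "out_nbrs A t = Y" using cn t unfolding common_nbrs_def by auto
  have "A \<union> X \<times> Y \<subseteq> A\<^sup>+"
    using X Y unfolding in_nbrs_def out_nbrs_def by (auto intro: trancl_into_trancl)
  with ac show "acyclic (A \<union> X \<times> Y)" by (rule acyclic_subset_trancl)
  show "finite (A \<union> X \<times> Y)" using fin finite_in_nbrs[OF fin] finite_out_nbrs[OF fin] X Y by auto
  show "common_nbrs (A \<union> X \<times> Y) T X Y"
    using cn common_nbrs_notin[OF ac cn]
    unfolding common_nbrs_def in_nbrs_def out_nbrs_def by blast
qed

text \<open>Eliminating the first twin creates the arcs \<open>X \<times> Y\<close> anyway.\<close>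

lemma elim_cost_add_product:
  assumes ac: "acyclic A" and cn: "common_nbrs A T X Y" and t: "t \<in> T"
  shows "elim_cost (A \<union> X \<times> Y) (t # \<sigma>) = elim_cost A (t # \<sigma>)"
proof -
  have X: "in_nbrs A t = X" and Y: "out_nbrs A t = Y" using cn t unfolding common_nbrs_def by auto
  have "t \<notin> X" "t \<notin> Y" using common_nbrs_notin[OF ac cn t] by auto
  then have "in_nbrs (A \<union> X \<times> Y) t = X" "out_nbrs (A \<union> X \<times> Y) t = Y"
    using X Y unfolding in_nbrs_def out_nbrs_def by auto
  then have "markowitz (A \<union> X \<times> Y) t = markowitz A t" "elim (A \<union> X \<times> Y) t = elim A t"
    using X Y \<open>t \<notin> X\<close> \<open>t \<notin> Y\<close> unfolding markowitz_def elim_def by auto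
  then show ?thesis by simp
qed

lemma contiguous_rearrangement_twin_head:
  assumes ac: "acyclic A" and fin: "finite A" and twins: "\<forall>u\<in>T. \<forall>v\<in>T. false_twins A u v"
    and d: "distinct (t # \<sigma>)" and sub: "T \<subseteq> set (t # \<sigma>)" and t: "t \<in> T"
  obtains \<sigma>' where "distinct \<sigma>'" "set \<sigma>' = set (t # \<sigma>)" "contiguous_block T \<sigma>'"
    "elim_cost A \<sigma>' \<le> elim_cost A (t # \<sigma>)"
proof -
  define X where "X = in_nbrs A t"
  define Y where "Y = out_nbrs A t"
  have cn: "common_nbrs A T X Y"
    unfolding X_def Y_def using twins t by (rule common_nbrs_false_twins)
  note A' = common_nbrs_add_product[OF ac fin cn t]
  obtain \<sigma>' where \<sigma>': "distinct \<sigma>'" "set \<sigma>' = set (t # \<sigma>)" "contiguous_block T \<sigma>'"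
    "elim_cost (A \<union> X \<times> Y) \<sigma>' \<le> elim_cost (A \<union> X \<times> Y) (t # \<sigma>)"
    using contiguous_rearrangement_with_product[OF A' _ d sub] by blast
  have "elim_cost A \<sigma>' \<le> elim_cost (A \<union> X \<times> Y) \<sigma>'" using A'(2) by (rule elim_cost_mono) auto
  also have "\<dots> \<le> elim_cost A (t # \<sigma>)"
    using \<sigma>'(4) elim_cost_add_product[OF ac cn t] by simp
  finally show ?thesis using that \<sigma>'(1-3) by blast
qed

lemma contiguous_rearrangement:
  assumes "acyclic A" "finite A" "\<forall>u\<in>T. \<forall>v\<in>T. false_twins A u v"
    and "distinct \<sigma>" "T \<subseteq> set \<sigma>"
  shows "\<exists>\<sigma>'. distinct \<sigma>' \<and> set \<sigma>' = set \<sigma> \<and> contiguous_block T \<sigma>' \<and> elim_cost A \<sigma>' \<le> elim_cost A \<sigma>"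
  using assms
proof (induction \<sigma> arbitrary: A)
  case Nil
  then have "contiguous_block T []" unfolding contiguous_block_def by auto
  then show ?case by auto
next
  case (Cons a \<sigma>)
  show ?case
  proof (cases "a \<in> T")
    case True
    then show ?thesis using contiguous_rearrangement_twin_head[OF Cons.prems] by metis
  next
    case False
    have "\<forall>u\<in>T. \<forall>v\<in>T. false_twins (elim A a) u v"
      using Cons.prems(3) False false_twins_elim by metis
    moreover have "T \<subseteq> set \<sigma>" using Cons.prems(5) False by auto
    ultimately obtain \<sigma>' where \<sigma>': "distinct \<sigma>'" "set \<sigma>' = set \<sigma>" "contiguous_block T \<sigma>'"
        "elim_cost (elim A a) \<sigma>' \<le> elim_cost (elim A a) \<sigma>"
      using Cons.IH[of "elim A a"] acyclic_elim[OF Cons.prems(1)] finite_elim[OF Cons.prems(2)]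
        Cons.prems(4) by auto
    then have "contiguous_block T (a # \<sigma>')"
      unfolding contiguous_block_def by (metis append_Cons)
    then show ?thesis using \<sigma>' Cons.prems(4) by (intro exI[of _ "a # \<sigma>'"]) auto
  qed
qed

theorem proposition2:
  fixes S I T :: "'a set" and A :: "('a \<times> 'a) set"
  assumes "finite S" and "finite I" and "S \<inter> I = {}"
    and "A \<subseteq> (S \<union> I) \<times> (S \<union> I)"
    and "acyclic A"
    and "T \<subseteq> I"
    and "\<forall>u\<in>T. \<forall>v\<in>T. false_twins A u v"
  shows "\<exists>\<sigma>. total_elim_seq I \<sigma>
            \<and> (\<forall>\<sigma>'. total_elim_seq I \<sigma>' \<longrightarrow> elim_cost A \<sigma> \<le> elim_cost A \<sigma>')
            \<and> (\<exists>xs ys zs. \<sigma> = xs @ ys @ zs \<and> set ys = T)"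
proof -
  have "finite A" using assms(1,2,4) by (simp add: finite_subset)
  obtain \<sigma>\<^sub>I where "total_elim_seq I \<sigma>\<^sub>I"
    using finite_distinct_list[OF assms(2)] unfolding total_elim_seq_def by blast
  then obtain \<sigma>\<^sub>0 where opt: "total_elim_seq I \<sigma>\<^sub>0"
    "\<forall>\<sigma>'. total_elim_seq I \<sigma>' \<longrightarrow> elim_cost A \<sigma>\<^sub>0 \<le> elim_cost A \<sigma>'"
    using ex_has_least_nat[of "total_elim_seq I" _ "elim_cost A"] by blast
  then obtain \<sigma> where \<sigma>: "distinct \<sigma>" "set \<sigma> = I" "contiguous_block T \<sigma>"
      "elim_cost A \<sigma> \<le> elim_cost A \<sigma>\<^sub>0"
    using contiguous_rearrangement[OF assms(5) \<open>finite A\<close> assms(7), of \<sigma>\<^sub>0] assms(6)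
    unfolding total_elim_seq_def by auto
  have "total_elim_seq I \<sigma>" using \<sigma>(1,2) unfolding total_elim_seq_def by simp
  moreover have "\<forall>\<sigma>'. total_elim_seq I \<sigma>' \<longrightarrow> elim_cost A \<sigma> \<le> elim_cost A \<sigma>'"
    using opt(2) \<sigma>(4) by (meson le_trans)
  ultimately show ?thesis using \<sigma>(3) unfolding contiguous_block_def by blast
qed

end
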